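(* For any $\alpha,\beta\in\{0,1\}^\infty$ with $\alpha\ne\beta$, $$\frac{1}{5^{|\alpha\wedge\beta|+1}}\le d_H(\mathcal K_\alpha,\mathcal K_\beta)<\frac{3\sqrt5}{5^{|\alpha\wedge\beta|+1}},\qquad d(\mathcal K_\alpha,\mathcal K_\beta)\ge\frac{1}{5^{|\alpha\wedge\beta|+1}}.$$
   Context: Let $I=[0,1]^3$. Let $\mathcal D_0=\{(i,2,2),(2,i,2),(2,2,i): i=0,1,2,3,4\}$ and $\mathcal D_1=\{d\in\{0,\ldots,4\}^3:\ \text{at least two coordinates of } d \text{ lie in }\{0,4\}\}$. For $i=0,1$ let $T_i(A)=\bigcup_{d\in\mathcal D_i}\frac{d+A}{5}$. For $\alpha=\alpha_1\alpha_2\ldots\in\{0,1\}^\infty$ let $\mathcal K_\alpha=\bigcap_{k\ge1}T_{\alpha_1}\circ\cdots\circ T_{\alpha_k}(I)$. $|\alpha\wedge\beta|$ denotes the length of the longest common initial segment of $\alpha$ and $\beta$. $d_H$ is the Hausdorff distance and $d(A,B)=\inf\{|a-b|:a\in A,b\in B\}$. *)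

theory Defs
  imports "HOL-Analysis.Analysis"
begin

definition D0 :: "(real^3) set" where
  "D0 = (\<Union>i\<in>{0..4::nat}. {vector [real i, 2, 2], vector [2, real i, 2], vector [2, 2, real i]})"

definition D1 :: "(real^3) set" where
  "D1 = {d. (\<forall>k. d$k \<in> {0,1,2,3,4}) \<and> (\<exists>k l. k \<noteq> l \<and> d$k \<in> {0,4} \<and> d$l \<in> {0,4})}"

definition Dig :: "nat \<Rightarrow> (real^3) set" where
  "Dig i = (if i = 0 then D0 else D1)"

definition Tmap :: "nat \<Rightarrow> (real^3) set \<Rightarrow> (real^3) set" where
  "Tmap i A = (\<Union>d\<in>Dig i. (\<lambda>x. (1/5) *\<^sub>R (d + x)) ` A)"

text \<open>Tcomp alpha k A = T_{alpha_1} o ... o T_{alpha_k} (A); alpha_j is alpha (j-1).\<close>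
fun Tcomp :: "(nat \<Rightarrow> nat) \<Rightarrow> nat \<Rightarrow> (real^3) set \<Rightarrow> (real^3) set" where
  "Tcomp \<alpha> 0 A = A"
| "Tcomp \<alpha> (Suc k) A = Tcomp \<alpha> k (Tmap (\<alpha> k) A)"

definition unitcube :: "(real^3) set" where
  "unitcube = cbox 0 1"

definition Kset :: "(nat \<Rightarrow> nat) \<Rightarrow> (real^3) set" where
  "Kset \<alpha> = (\<Inter>k\<in>{1..}. Tcomp \<alpha> k unitcube)"

definition common_prefix_len :: "(nat \<Rightarrow> nat) \<Rightarrow> (nat \<Rightarrow> nat) \<Rightarrow> nat" where
  "common_prefix_len \<alpha> \<beta> = (LEAST n. \<alpha> n \<noteq> \<beta> n)"

text \<open>Hausdorff distance (for nonempty bounded sets).\<close>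
definition hausdist :: "'a::metric_space set \<Rightarrow> 'a set \<Rightarrow> real" where
  "hausdist A B = max (SUP a\<in>A. infdist a B) (SUP b\<in>B. infdist b A)"

end

theory Submission
  imports Defs
begin

(* Every point of K_alpha is a base-5 expansion sum_j 5^-(j+1) e_j with digits e_j in D_(alpha_j),
   and cutting it after k digits leaves a remainder 5^-k r with r in the unit cube.
   Let n be the first index where alpha and beta differ. A digit of D_0 and a digit of D_1 differ
   by exactly 2 in some coordinate, the first n digits contribute integer multiples of 5^-n, and the
   remainders after n+1 digits differ by at most 5^-(n+1) per coordinate; so in that coordinate
   5^(n+1) (a - b) = 5 z +- 2 + t with z integer and |t| <= 1, which has modulus at least 1.
   Conversely, keeping the first n digits of a point of K_alpha, replacing digit n by a digit of
   D_(beta_n) within 2 in each coordinate and continuing arbitrarily gives a point of K_beta whose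
   coordinates are within 3 * 5^-(n+1), hence at distance at most 3 sqrt 3 * 5^-(n+1). *)

lemma Dig_coord_cases:
  assumes "d \<in> Dig y"
  shows "d $ i \<in> {0,1,2,3,4}"
proof (cases "y = 0")
  case True
  with assms obtain n :: nat where n: "n \<le> 4" and
    "d = vector [real n, 2, 2] \<or> d = vector [2, real n, 2] \<or> d = vector [2, 2, real n]"
    unfolding Dig_def D0_def by auto
  moreover have "real n \<in> {0,1,2,3,4}" using n by (auto simp: le_Suc_eq numeral_eq_Suc)
  ultimately show ?thesis using exhaust_3[of i] by auto
qed (use assms in \<open>simp add: Dig_def D1_def\<close>)

lemma Dig_coord_bounds: "d \<in> Dig y \<Longrightarrow> 0 \<le> d $ i \<and> d $ i \<le> 4"
  using Dig_coord_cases[of d y i] by auto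

lemma Dig_coord_Ints: "d \<in> Dig y \<Longrightarrow> d $ i \<in> \<int>"
  using Dig_coord_cases[of d y i] by auto

lemma D0_D1_coord_gap:
  assumes "u \<in> D0" and "v \<in> D1"
  shows "\<exists>k. \<bar>u $ k - v $ k\<bar> = 2"
proof -
  obtain k l where kl: "k \<noteq> l" "v $ k \<in> {0,4}" "v $ l \<in> {0,4}"
    using \<open>v \<in> D1\<close> unfolding D1_def by blast
  obtain n :: nat where
    "u = vector [real n, 2, 2] \<or> u = vector [2, real n, 2] \<or> u = vector [2, 2, real n]"
    using \<open>u \<in> D0\<close> unfolding D0_def by auto
  with \<open>k \<noteq> l\<close> have "u $ k = 2 \<or> u $ l = 2"
    using exhaust_3[of k] exhaust_3[of l] by auto
  with kl obtain j where "u $ j = 2" "v $ j \<in> {0,4}" by blast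
  then show ?thesis by (intro exI[of _ j]) auto
qed

lemma Dig_near:
  assumes "\<And>k. 0 \<le> u $ k \<and> u $ k \<le> 4"
  shows "\<exists>v\<in>Dig y. \<forall>k. \<bar>u $ k - v $ k\<bar> \<le> 2"
proof (cases "y = 0")
  case True
  have "vector [real 2, 2, 2] \<in> D0" unfolding D0_def by (intro UN_I[of "2::nat"]) auto
  moreover have "(vector [2, 2, 2] :: real^3) $ k = 2" for k
    using exhaust_3[of k] by auto
  ultimately show ?thesis
    using True assms by (intro bexI[of _ "vector [2, 2, 2]"]) (auto simp: Dig_def abs_le_iff)
next
  case False
  define v :: "real^3" where "v = (\<chi> k. if u $ k \<le> 2 then 0 else 4)"
  have "(1::3) \<noteq> 2" by simp
  then have "v \<in> D1" unfolding D1_def v_def by fastforce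
  then show ?thesis
    using False assms by (intro bexI[of _ v]) (auto simp: Dig_def v_def)
qed

lemma Dig_nonempty: "Dig y \<noteq> {}"
  using Dig_near[of 0 y] by auto

definition address_prefix :: "(nat \<Rightarrow> real^3) \<Rightarrow> nat \<Rightarrow> real^3" where
  "address_prefix e k = (\<Sum>j<k. (1/5)^Suc j *\<^sub>R e j)"

lemma address_prefix_Suc:
  "address_prefix e (Suc k) = address_prefix e k + (1/5)^Suc k *\<^sub>R e k"
  by (simp add: address_prefix_def)

lemma address_prefix_cong:
  "(\<And>j. j < k \<Longrightarrow> e j = e' j) \<Longrightarrow> address_prefix e k = address_prefix e' k"
  unfolding address_prefix_def by (rule sum.cong) auto

lemma Tcomp_eq:
  "Tcomp \<gamma> k A =
     {address_prefix e k + (1/5)^k *\<^sub>R r | e r. (\<forall>j<k. e j \<in> Dig (\<gamma> j)) \<and> r \<in> A}"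
proof (induction k arbitrary: A)
  case 0
  then show ?case by (simp add: address_prefix_def)
next
  case (Suc k)
  have step: "address_prefix e k + (1/5)^k *\<^sub>R ((1/5) *\<^sub>R (d + r))
      = address_prefix (e(k := d)) (Suc k) + (1/5)^Suc k *\<^sub>R r" for e d r
  proof -
    have "address_prefix (e(k := d)) k = address_prefix e k"
      by (rule address_prefix_cong) simp
    then show ?thesis by (simp add: address_prefix_Suc scaleR_add_right)
  qed
  show ?case
  proof (intro set_eqI iffI)
    fix x assume "x \<in> Tcomp \<gamma> (Suc k) A"
    then obtain e r' where "\<forall>j<k. e j \<in> Dig (\<gamma> j)" "r' \<in> Tmap (\<gamma> k) A"
      and x: "x = address_prefix e k + (1/5)^k *\<^sub>R r'"
      using Suc.IH by auto
    moreover from \<open>r' \<in> Tmap (\<gamma> k) A\<close> obtain d r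
      where "d \<in> Dig (\<gamma> k)" "r \<in> A" and r': "r' = (1/5) *\<^sub>R (d + r)"
      unfolding Tmap_def by blast
    moreover have "x = address_prefix (e(k := d)) (Suc k) + (1/5)^Suc k *\<^sub>R r"
      unfolding x r' by (rule step)
    ultimately show "x \<in> {address_prefix e (Suc k) + (1/5)^Suc k *\<^sub>R r | e r.
        (\<forall>j<Suc k. e j \<in> Dig (\<gamma> j)) \<and> r \<in> A}"
      by (intro CollectI exI[of _ "e(k := d)"] exI[of _ r]) (auto simp: less_Suc_eq)
  next
    fix x assume "x \<in> {address_prefix e (Suc k) + (1/5)^Suc k *\<^sub>R r | e r.
        (\<forall>j<Suc k. e j \<in> Dig (\<gamma> j)) \<and> r \<in> A}"
    then obtain e r where e: "\<forall>j<Suc k. e j \<in> Dig (\<gamma> j)" and "r \<in> A"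
      and x: "x = address_prefix e (Suc k) + (1/5)^Suc k *\<^sub>R r"
      by blast
    have "x = address_prefix e k + (1/5)^k *\<^sub>R ((1/5) *\<^sub>R (e k + r))"
      using step[of e "e k" r] by (simp add: x)
    moreover have "(1/5) *\<^sub>R (e k + r) \<in> Tmap (\<gamma> k) A"
      using e \<open>r \<in> A\<close> unfolding Tmap_def by auto
    moreover have "\<forall>j<k. e j \<in> Dig (\<gamma> j)"
      using e by simp
    ultimately show "x \<in> Tcomp \<gamma> (Suc k) A"
      unfolding Tcomp.simps Suc.IH by blast
  qed
qed

lemma Kset_address_prefixE:
  assumes "x \<in> Kset \<gamma>"
  obtains e r where "\<forall>j<Suc n. e j \<in> Dig (\<gamma> j)" and "r \<in> unitcube"
    and "x = address_prefix e (Suc n) + (1/5)^Suc n *\<^sub>R r"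
proof -
  have "x \<in> Tcomp \<gamma> (Suc n) unitcube"
    using assms unfolding Kset_def by (auto simp del: Tcomp.simps)
  then show ?thesis
    using that unfolding Tcomp_eq by blast
qed

lemma norm_le_sqrt_card:
  fixes x :: "real^'n"
  assumes "\<And>i. \<bar>x $ i\<bar> \<le> c"
  shows "norm x \<le> sqrt CARD('n) * c"
proof -
  have "infnorm x \<le> c"
    unfolding infnorm_cart using assms by (intro cSup_least) auto
  then have "sqrt DIM(real^'n) * infnorm x \<le> sqrt CARD('n) * c"
    by (simp add: mult_left_mono)
  with norm_le_infnorm[of x] show ?thesis by linarith
qed

lemma unitcube_nth_diff:
  assumes "r \<in> unitcube" and "s \<in> unitcube"
  shows "\<bar>r $ k - s $ k\<bar> \<le> 1"
proof -
  have "0 \<le> r $ k" "r $ k \<le> 1" "0 \<le> s $ k" "s $ k \<le> 1"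
    using assms by (simp_all add: unitcube_def mem_box_cart)
  then show ?thesis by (auto simp: abs_le_iff)
qed

definition address :: "(nat \<Rightarrow> real^3) \<Rightarrow> real^3" where
  "address E = (\<Sum>j. (1/5)^Suc j *\<^sub>R E j)"

lemma fifth_powers_sums: "(\<lambda>j. (1/5::real)^Suc j * 4) sums 1"
proof -
  have "(\<lambda>j. (4/5) * (1/5::real)^j) sums ((4/5) * (1 / (1 - 1/5)))"
    by (intro sums_mult geometric_sums) simp
  then show ?thesis by (simp add: mult_ac)
qed

lemma address_sums:
  assumes "\<And>j i. 0 \<le> E j $ i \<and> E j $ i \<le> 4"
  shows "(\<lambda>j. (1/5)^Suc j *\<^sub>R E j) sums address E"
proof -
  have "summable (\<lambda>j. (1/5::real)^Suc j * 4 * sqrt 3)"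
    using fifth_powers_sums by (intro summable_mult2) (auto simp: sums_iff)
  moreover have "norm ((1/5)^Suc j *\<^sub>R E j) \<le> (1/5::real)^Suc j * 4 * sqrt 3" for j
  proof -
    have "norm (E j) \<le> sqrt CARD(3) * 4"
      using assms by (intro norm_le_sqrt_card) (simp add: abs_le_iff)
    then show ?thesis by (simp add: mult_left_mono mult_ac)
  qed
  ultimately have "summable (\<lambda>j. (1/5)^Suc j *\<^sub>R E j)"
    by (rule summable_comparison_test')
  then show ?thesis by (simp add: address_def summable_sums)
qed

lemma address_in_unitcube:
  assumes "\<And>j i. 0 \<le> E j $ i \<and> E j $ i \<le> 4"
  shows "address E \<in> unitcube"
proof -
  have "0 \<le> address E $ i \<and> address E $ i \<le> 1" for i
  proof -
    have sums_i: "(\<lambda>j. ((1/5)^Suc j *\<^sub>R E j) $ i) sums (address E $ i)"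
      using bounded_linear.sums[OF bounded_linear_vec_nth address_sums[of E, OF assms]] .
    have "0 \<le> address E $ i"
      by (rule sums_le[OF _ sums_zero sums_i]) (simp add: assms)
    moreover have "address E $ i \<le> 1"
      by (rule sums_le[OF _ sums_i fifth_powers_sums]) (simp add: assms)
    ultimately show ?thesis ..
  qed
  then show ?thesis unfolding unitcube_def mem_box_cart by simp
qed

lemma address_shift:
  assumes "\<And>j i. 0 \<le> E j $ i \<and> E j $ i \<le> 4"
  shows "address E = address_prefix E k + (1/5)^k *\<^sub>R address (\<lambda>j. E (j + k))"
proof -
  have "(\<lambda>j. (1/5::real)^k *\<^sub>R ((1/5)^Suc j *\<^sub>R E (j + k)))
      sums ((1/5)^k *\<^sub>R address (\<lambda>j. E (j + k)))"
    by (intro sums_scaleR_right address_sums assms)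
  then have "(\<lambda>j. (1/5)^Suc (j + k) *\<^sub>R E (j + k)) sums ((1/5)^k *\<^sub>R address (\<lambda>j. E (j + k)))"
    by (simp add: power_add mult_ac)
  then have "(\<lambda>j. (1/5)^Suc j *\<^sub>R E j)
      sums ((1/5)^k *\<^sub>R address (\<lambda>j. E (j + k)) + address_prefix E k)"
    unfolding address_prefix_def by (subst sums_iff_shift[symmetric]) simp
  with address_sums[of E, OF assms] show ?thesis
    by (simp add: sums_unique2 add.commute)
qed

lemma address_in_Kset:
  assumes "\<And>j. E j \<in> Dig (\<gamma> j)"
  shows "address E \<in> Kset \<gamma>"
proof -
  have bounds: "\<And>j i. 0 \<le> E j $ i \<and> E j $ i \<le> 4"
    using Dig_coord_bounds[OF assms] by blast
  have "address E \<in> Tcomp \<gamma> k unitcube" for k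
  proof -
    have "address (\<lambda>j. E (j + k)) \<in> unitcube"
      using bounds by (rule address_in_unitcube)
    then show ?thesis
      unfolding Tcomp_eq address_shift[of E k, OF bounds] using assms by blast
  qed
  then show ?thesis unfolding Kset_def by blast
qed

lemma Kset_nonempty: "Kset \<gamma> \<noteq> {}"
proof -
  have "(SOME d. d \<in> Dig (\<gamma> j)) \<in> Dig (\<gamma> j)" for j
    using Dig_nonempty by (simp add: some_in_eq)
  then have "address (\<lambda>j. SOME d. d \<in> Dig (\<gamma> j)) \<in> Kset \<gamma>"
    by (rule address_in_Kset)
  then show ?thesis by blast
qed

lemma address_prefix_scaled_Ints:
  assumes "\<And>j i. j < n \<Longrightarrow> e j $ i \<in> \<int>"
  shows "5^n * address_prefix e n $ i \<in> \<int>"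
proof -
  have "5^n * address_prefix e n $ i = (\<Sum>j<n. 5^(n - Suc j) * e j $ i)"
    unfolding address_prefix_def sum_component sum_distrib_left
  proof (rule sum.cong)
    fix j assume "j \<in> {..<n}"
    then have "(5::real)^n = 5^Suc j * 5^(n - Suc j)"
      by (subst power_add[symmetric]) simp
    then show "5^n * ((1/5)^Suc j *\<^sub>R e j) $ i = 5^(n - Suc j) * e j $ i"
      by (simp add: power_one_over)
  qed simp
  also have "\<dots> \<in> \<int>"
    using assms by (intro Ints_sum Ints_mult) auto
  finally show ?thesis .
qed

lemma address_prefix_Suc_scaled:
  "5^Suc n *\<^sub>R (address_prefix e (Suc n) + (1/5)^Suc n *\<^sub>R r)
     = 5 *\<^sub>R (5^n *\<^sub>R address_prefix e n) + e n + r"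
  by (simp add: address_prefix_Suc scaleR_add_right power_one_over)

lemma five_mult_int_gap:
  fixes z :: int and \<delta> t :: real
  assumes "\<bar>\<delta>\<bar> = 2" and "\<bar>t\<bar> \<le> 1"
  shows "1 \<le> \<bar>5 * of_int z + \<delta> + t\<bar>"
proof -
  have "z = 0 \<or> 1 \<le> z \<or> z \<le> -1" by linarith
  then have "real_of_int z = 0 \<or> 1 \<le> real_of_int z \<or> real_of_int z \<le> -1" by auto
  with assms show ?thesis by linarith
qed

lemma Kset_dist_ge:
  assumes "(\<alpha> n = 0) \<noteq> (\<beta> n = 0)" and "a \<in> Kset \<alpha>" and "b \<in> Kset \<beta>"
  shows "(1/5)^Suc n \<le> dist a b"
proof -
  obtain e r where e: "\<forall>j<Suc n. e j \<in> Dig (\<alpha> j)" and "r \<in> unitcube"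
    and a: "a = address_prefix e (Suc n) + (1/5)^Suc n *\<^sub>R r"
    using Kset_address_prefixE[OF \<open>a \<in> Kset \<alpha>\<close>] by blast
  obtain e' r' where e': "\<forall>j<Suc n. e' j \<in> Dig (\<beta> j)" and "r' \<in> unitcube"
    and b: "b = address_prefix e' (Suc n) + (1/5)^Suc n *\<^sub>R r'"
    using Kset_address_prefixE[OF \<open>b \<in> Kset \<beta>\<close>] by blast
  have "e n \<in> D0 \<and> e' n \<in> D1 \<or> e' n \<in> D0 \<and> e n \<in> D1"
    using assms(1) e e' by (auto simp: Dig_def)
  then obtain k where gap: "\<bar>e n $ k - e' n $ k\<bar> = 2"
    using D0_D1_coord_gap by (metis abs_minus_commute)
  have "\<bar>r $ k - r' $ k\<bar> \<le> 1"
    using \<open>r \<in> unitcube\<close> \<open>r' \<in> unitcube\<close> by (rule unitcube_nth_diff)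
  have "5^n * address_prefix e n $ k - 5^n * address_prefix e' n $ k \<in> \<int>"
    using e e' by (intro Ints_diff address_prefix_scaled_Ints) (meson Dig_coord_Ints less_SucI)+
  then obtain z where z: "5^n * address_prefix e n $ k - 5^n * address_prefix e' n $ k = of_int z"
    by (auto elim: Ints_cases)
  have scaled: "5^Suc n * (a $ k - b $ k) = 5 * of_int z + (e n $ k - e' n $ k) + (r $ k - r' $ k)"
    using arg_cong[OF address_prefix_Suc_scaled[of n e r], of "\<lambda>x. x $ k"]
      arg_cong[OF address_prefix_Suc_scaled[of n e' r'], of "\<lambda>x. x $ k"] z
    unfolding a b by (simp add: algebra_simps)
  have "1 \<le> \<bar>5^Suc n * (a $ k - b $ k)\<bar>"
    unfolding scaled using gap \<open>\<bar>r $ k - r' $ k\<bar> \<le> 1\<close> by (rule five_mult_int_gap)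
  then have "1 \<le> 5^Suc n * \<bar>a $ k - b $ k\<bar>"
    by (simp add: abs_mult)
  then have "(1/5)^Suc n \<le> \<bar>a $ k - b $ k\<bar>"
    by (simp add: power_one_over field_simps)
  also have "\<dots> \<le> dist a b"
    unfolding dist_norm by (metis component_le_norm_cart vector_minus_component)
  finally show ?thesis .
qed

lemma Kset_infdist_le:
  assumes "\<forall>j<n. \<alpha> j = \<beta> j" and "a \<in> Kset \<alpha>"
  shows "infdist a (Kset \<beta>) \<le> sqrt 3 * 3 * (1/5)^Suc n"
proof -
  obtain e r where e: "\<forall>j<Suc n. e j \<in> Dig (\<alpha> j)" and "r \<in> unitcube"
    and a: "a = address_prefix e (Suc n) + (1/5)^Suc n *\<^sub>R r"
    using Kset_address_prefixE[OF \<open>a \<in> Kset \<alpha>\<close>] by blast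
  obtain v where "v \<in> Dig (\<beta> n)" and v: "\<forall>k. \<bar>e n $ k - v $ k\<bar> \<le> 2"
    using Dig_near Dig_coord_bounds e by blast
  define E where "E j = (if j < n then e j else if j = n then v else SOME d. d \<in> Dig (\<beta> j))" for j
  have E: "E j \<in> Dig (\<beta> j)" for j
    using assms(1) e \<open>v \<in> Dig (\<beta> n)\<close> Dig_nonempty
    by (auto simp: E_def some_in_eq less_Suc_eq)
  then have bounds: "\<And>j i. 0 \<le> E j $ i \<and> E j $ i \<le> 4"
    using Dig_coord_bounds by blast
  define s where "s = address (\<lambda>j. E (j + Suc n))"
  have "s \<in> unitcube"
    unfolding s_def using bounds by (rule address_in_unitcube)
  have "address_prefix E n = address_prefix e n"
    by (rule address_prefix_cong) (simp add: E_def)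
  then have "a - address E = (1/5)^Suc n *\<^sub>R ((e n - v) + (r - s))"
    unfolding a address_shift[of E "Suc n", OF bounds] s_def
    by (simp add: address_prefix_Suc E_def algebra_simps)
  moreover have "norm ((e n - v) + (r - s)) \<le> sqrt CARD(3) * 3"
  proof (rule norm_le_sqrt_card)
    fix k
    have "\<bar>r $ k - s $ k\<bar> \<le> 1"
      using \<open>r \<in> unitcube\<close> \<open>s \<in> unitcube\<close> by (rule unitcube_nth_diff)
    with v[rule_format, of k] abs_triangle_ineq[of "e n $ k - v $ k" "r $ k - s $ k"]
    show "\<bar>((e n - v) + (r - s)) $ k\<bar> \<le> 3" by simp
  qed
  ultimately have "dist a (address E) \<le> sqrt 3 * 3 * (1/5)^Suc n"
    by (simp add: dist_norm mult_left_mono mult.commute)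
  moreover have "address E \<in> Kset \<beta>"
    using E by (rule address_in_Kset)
  ultimately show ?thesis
    by (rule infdist_le2[rotated])
qed

lemma hausdist_le:
  assumes "A \<noteq> {}" and "B \<noteq> {}"
    and "\<And>a. a \<in> A \<Longrightarrow> infdist a B \<le> c" and "\<And>b. b \<in> B \<Longrightarrow> infdist b A \<le> c"
  shows "hausdist A B \<le> c"
  unfolding hausdist_def using assms by (auto intro!: cSUP_least)

lemma setdist_le_hausdist:
  assumes "a \<in> A" and "bdd_above ((\<lambda>a. infdist a B) ` A)"
  shows "setdist A B \<le> hausdist A B"
proof -
  have "setdist A B \<le> infdist a B"
    using assms(1) by (simp add: infdist_eq_setdist setdist_le_sing)
  also have "\<dots> \<le> (SUP a\<in>A. infdist a B)"
    using assms by (rule cSUP_upper)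
  also have "\<dots> \<le> hausdist A B"
    unfolding hausdist_def by simp
  finally show ?thesis .
qed

lemma common_prefix_len_differ:
  "\<alpha> \<noteq> \<beta> \<Longrightarrow> \<alpha> (common_prefix_len \<alpha> \<beta>) \<noteq> \<beta> (common_prefix_len \<alpha> \<beta>)"
  unfolding common_prefix_len_def by (rule LeastI_ex) (auto simp: fun_eq_iff)

lemma common_prefix_len_agree: "j < common_prefix_len \<alpha> \<beta> \<Longrightarrow> \<alpha> j = \<beta> j"
  unfolding common_prefix_len_def using not_less_Least by blast

theorem corollary1:
  fixes \<alpha> \<beta> :: "nat \<Rightarrow> nat"
  assumes "\<forall>n. \<alpha> n \<in> {0,1}" and "\<forall>n. \<beta> n \<in> {0,1}" and "\<alpha> \<noteq> \<beta>"
  shows "1 / 5 ^ (common_prefix_len \<alpha> \<beta> + 1) \<le> hausdist (Kset \<alpha>) (Kset \<beta>)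
     \<and> hausdist (Kset \<alpha>) (Kset \<beta>) < 3 * sqrt 5 / 5 ^ (common_prefix_len \<alpha> \<beta> + 1)
     \<and> setdist (Kset \<alpha>) (Kset \<beta>) \<ge> 1 / 5 ^ (common_prefix_len \<alpha> \<beta> + 1)"
proof -
  define n where "n = common_prefix_len \<alpha> \<beta>"
  have "\<alpha> n \<noteq> \<beta> n" "\<alpha> n \<in> {0,1}" "\<beta> n \<in> {0,1}"
    using common_prefix_len_differ[OF assms(3)] assms(1,2) unfolding n_def by auto
  then have "(\<alpha> n = 0) \<noteq> (\<beta> n = 0)" by auto
  then have lower: "(1/5)^Suc n \<le> setdist (Kset \<alpha>) (Kset \<beta>)"
    by (intro le_setdistI Kset_nonempty Kset_dist_ge)
  have agree: "\<forall>j<n. \<alpha> j = \<beta> j" "\<forall>j<n. \<beta> j = \<alpha> j"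
    unfolding n_def using common_prefix_len_agree by (auto simp: eq_commute)
  have upper: "hausdist (Kset \<alpha>) (Kset \<beta>) \<le> sqrt 3 * 3 * (1/5)^Suc n"
    using agree by (intro hausdist_le Kset_nonempty Kset_infdist_le)
  obtain a where "a \<in> Kset \<alpha>" using Kset_nonempty by blast
  moreover have "bdd_above ((\<lambda>a. infdist a (Kset \<beta>)) ` Kset \<alpha>)"
    using Kset_infdist_le[OF agree(1)] by (intro bdd_aboveI2)
  ultimately have "setdist (Kset \<alpha>) (Kset \<beta>) \<le> hausdist (Kset \<alpha>) (Kset \<beta>)"
    by (rule setdist_le_hausdist)
  moreover have "sqrt 3 * 3 * (1/5)^Suc n < 3 * sqrt 5 * (1/5::real)^Suc n" by simp
  moreover have "1 / 5 ^ (n + 1) = (1/5::real)^Suc n" "3 * sqrt 5 / 5 ^ (n + 1) = 3 * sqrt 5 * (1/5::real)^Suc n"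
    by (simp_all add: power_one_over)
  ultimately show ?thesis
    using lower upper unfolding n_def[symmetric] by linarith
qed

end
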